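(* Let $(B,\lfloor\cdot,\cdot\rfloor,\|\cdot\|)$ be an SSDB space, $q(b):=\tfrac12\lfloor b,b\rfloor$, and let $f,g\colon B\to\,]{-}\infty,\infty]$ be proper convex lower semicontinuous BC--functions. Suppose $\rho\colon B\to B$ is a continuous linear bijection such that $\lfloor\rho(b),\rho(c)\rfloor=\lfloor b,-c\rfloor$ for all $b,c\in B$. Then $\mathrm{dom}\,f-\rho^{-1}\mathrm{dom}\,g=B\iff{\cal P}_q(f)-\rho^{-1}{\cal P}_q(g)=B$, and $\mathrm{dom}\,f+\rho^{-1}\mathrm{dom}\,g=B\iff{\cal P}_q(f)+\rho^{-1}{\cal P}_q(g)=B$.
   Context: An SSDB space is a triple $(B,\lfloor\cdot,\cdot\rfloor,\|\cdot\|)$ where $B$ is a nonzero real vector space, $\lfloor\cdot,\cdot\rfloor$ a symmetric bilinear form, $(B,\|\cdot\|)$ a Banach space, and there is a linear isometry $\iota$ of $B$ onto $B^*$ with $\langle b,\iota(c)\rangle=\lfloor b,c\rfloor$. $\mathrm{dom}\,f:=\{b\colon f(b)\in\mathbb{R}\}$, $f^@(c):=\sup_b[\lfloor b,c\rfloor-f(b)]$. A BC--function is a proper convex $f$ with $f^@(b)\ge f(b)\ge q(b)$ for all $b$. ${\cal P}_q(f):=\{b\colon f(b)=q(b)\}$. *)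

theory Defs
  imports "HOL-Analysis.Analysis"
begin

definition SSDB :: "('a::banach \<Rightarrow> 'a \<Rightarrow> real) \<Rightarrow> bool" where
  "SSDB s \<longleftrightarrow>
     (\<exists>b::'a. b \<noteq> 0) \<and>
     (\<forall>b c. s b c = s c b) \<and>
     (\<forall>c. linear (\<lambda>b. s b c)) \<and>
     (\<exists>\<iota> :: 'a \<Rightarrow> ('a \<Rightarrow>\<^sub>L real).
        linear \<iota> \<and> (\<forall>c. norm (\<iota> c) = norm c) \<and> surj \<iota> \<and>
        (\<forall>b c. blinfun_apply (\<iota> c) b = s b c))"

definition qf :: "('a \<Rightarrow> 'a \<Rightarrow> real) \<Rightarrow> 'a \<Rightarrow> real" where
  "qf s b = s b b / 2"

definition edom :: "('a \<Rightarrow> ereal) \<Rightarrow> 'a set" where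
  "edom f = {b. \<bar>f b\<bar> \<noteq> \<infinity>}"

definition proper_fun :: "('a \<Rightarrow> ereal) \<Rightarrow> bool" where
  "proper_fun f \<longleftrightarrow> (\<forall>b. f b \<noteq> -\<infinity>) \<and> (\<exists>b. f b \<noteq> \<infinity>)"

definition convex_fun :: "('a::real_vector \<Rightarrow> ereal) \<Rightarrow> bool" where
  "convex_fun f \<longleftrightarrow> (\<forall>x y t. 0 < t \<and> t < 1 \<longrightarrow>
      f (t *\<^sub>R x + (1 - t) *\<^sub>R y) \<le> ereal t * f x + ereal (1 - t) * f y)"

definition lsc_fun :: "('a::topological_space \<Rightarrow> ereal) \<Rightarrow> bool" where
  "lsc_fun f \<longleftrightarrow> (\<forall>x. f x \<le> Liminf (at x) f)"

definition fenchel_at :: "('a \<Rightarrow> 'a \<Rightarrow> real) \<Rightarrow> ('a \<Rightarrow> ereal) \<Rightarrow> 'a \<Rightarrow> ereal" where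
  "fenchel_at s f c = (SUP b. ereal (s b c) - f b)"

definition BC_fun :: "('a::real_vector \<Rightarrow> 'a \<Rightarrow> real) \<Rightarrow> ('a \<Rightarrow> ereal) \<Rightarrow> bool" where
  "BC_fun s f \<longleftrightarrow> proper_fun f \<and> convex_fun f \<and>
     (\<forall>b. fenchel_at s f b \<ge> f b \<and> f b \<ge> ereal (qf s b))"

definition Pq :: "('a \<Rightarrow> 'a \<Rightarrow> real) \<Rightarrow> ('a \<Rightarrow> ereal) \<Rightarrow> 'a set" where
  "Pq s f = {b. f b = ereal (qf s b)}"

definition set_diff_mk :: "'a::ab_group_add set \<Rightarrow> 'a set \<Rightarrow> 'a set" where
  "set_diff_mk A C = {a - c | a c. a \<in> A \<and> c \<in> C}"

definition set_sum_mk :: "'a::ab_group_add set \<Rightarrow> 'a set \<Rightarrow> 'a set" where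
  "set_sum_mk A C = {a + c | a c. a \<in> A \<and> c \<in> C}"

end

theory Submission
  imports Defs
begin

text \<open>Only the passage from the domains to the sets \<open>P\<^sub>q\<close> needs work. Given \<open>x\<close>, put
  \<open>\<phi> = f - \<lfloor>\<cdot>, x\<rfloor>\<close> and \<open>\<psi> = g \<circ> \<rho>(\<cdot> - x)\<close>. The inequalities \<open>f, g \<ge> q\<close> and \<open>q \<circ> \<rho> = -q\<close> give
  \<open>\<phi> + \<psi> \<ge> -q(x)\<close>, and \<open>dom \<phi> - dom \<psi> = B\<close> is the hypothesis, so the Attouch--Brezis theorem
  yields a continuous linear functional, represented as \<open>\<lfloor>\<cdot>, z\<rfloor>\<close>, with
  \<open>-q(x) + \<lfloor>a - c, z\<rfloor> \<le> \<phi>(a) + \<psi>(c)\<close>. Rewritten, this says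
  \<open>f(a) + g(d) \<ge> \<lfloor>a, x + z\<rfloor> + \<lfloor>d, \<rho> z\<rfloor> - q(x + z) - q(\<rho> z)\<close> for all \<open>a, d\<close>, i.e.
  \<open>f\<^sup>@(x + z) + g\<^sup>@(\<rho> z) \<le> q(x + z) + q(\<rho> z)\<close>; as \<open>f\<^sup>@ \<ge> f \<ge> q\<close> and \<open>g\<^sup>@ \<ge> g \<ge> q\<close>, this forces
  \<open>x + z \<in> P\<^sub>q(f)\<close> and \<open>\<rho> z \<in> P\<^sub>q(g)\<close>, so \<open>x = (x + z) - z\<close>. The statement about sums is the one
  about differences for \<open>-\<rho>\<close>.

  The Attouch--Brezis theorem in turn: by Baire category and an open mapping argument the
  differences of bounded sublevel sets of \<open>\<phi>\<close> and \<open>\<psi>\<close> contain a ball around 0, so the sublinear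
  functional of slopes of the infimal convolution along rays is bounded there, and a linear
  functional below it (Hahn--Banach) is continuous.\<close>

section \<open>Hahn--Banach for sublinear functionals\<close>

locale sublinear_functional =
  fixes p :: "'a::real_vector \<Rightarrow> real"
  assumes subadditive: "p (x + y) \<le> p x + p y"
    and pos_homogeneous: "c > 0 \<Longrightarrow> p (c *\<^sub>R x) = c * p x"
begin

lemma zero: "p 0 = 0"
  using pos_homogeneous[of 2 0] by simp

lemma pos_homogeneous_divide: "c > 0 \<Longrightarrow> c * p ((1 / c) *\<^sub>R x) = p x"
  using pos_homogeneous[of c "(1 / c) *\<^sub>R x"] by simp

end

definition dominated_linear_graph :: "('a::real_vector \<Rightarrow> real) \<Rightarrow> ('a \<times> real) set \<Rightarrow> bool" where
  "dominated_linear_graph p G \<longleftrightarrow> (0, 0) \<in> G \<and> (\<forall>u\<in>G. \<forall>v\<in>G. u + v \<in> G) \<and> (\<forall>c. \<forall>u\<in>G. c *\<^sub>R u \<in> G)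
     \<and> (\<forall>x s t. (x, s) \<in> G \<longrightarrow> (x, t) \<in> G \<longrightarrow> s = t) \<and> (\<forall>x t. (x, t) \<in> G \<longrightarrow> t \<le> p x)"

lemma dominated_linear_graphD:
  assumes "dominated_linear_graph p G"
  shows dominated_linear_graph_zero: "(0, 0) \<in> G"
    and dominated_linear_graph_add: "u \<in> G \<Longrightarrow> v \<in> G \<Longrightarrow> u + v \<in> G"
    and dominated_linear_graph_scaleR: "u \<in> G \<Longrightarrow> c *\<^sub>R u \<in> G"
    and dominated_linear_graph_unique: "(x, s) \<in> G \<Longrightarrow> (x, t) \<in> G \<Longrightarrow> s = t"
    and dominated_linear_graph_le: "(x, t) \<in> G \<Longrightarrow> t \<le> p x"
  using assms unfolding dominated_linear_graph_def by blast+

context sublinear_functional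
begin

lemma extension_constant_exists:
  assumes G: "dominated_linear_graph p G"
  obtains c where "\<And>y t. (y, t) \<in> G \<Longrightarrow> t - p (y - x0) \<le> c"
    and "\<And>y t. (y, t) \<in> G \<Longrightarrow> c \<le> p (y + x0) - t"
proof
  define L where "L = {t - p (y - x0) | y t. (y, t) \<in> G}"
  have below: "t - p (y - x0) \<le> p (y' + x0) - t'" if "(y, t) \<in> G" "(y', t') \<in> G" for y t y' t'
  proof -
    have "t + t' \<le> p (y + y')"
      using dominated_linear_graph_add[OF G that] dominated_linear_graph_le[OF G] by simp
    also have "\<dots> \<le> p (y - x0) + p (y' + x0)"
      using subadditive[of "y - x0" "y' + x0"] by simp
    finally show ?thesis by simp
  qed
  have "L \<noteq> {}" using dominated_linear_graph_zero[OF G] unfolding L_def by blast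
  moreover have "bdd_above L"
    unfolding L_def bdd_above_def using below[OF _ dominated_linear_graph_zero[OF G]] by auto
  ultimately show "t - p (y - x0) \<le> Sup L" "Sup L \<le> p (y + x0) - t" if "(y, t) \<in> G" for y t
    using that below by (auto intro!: cSup_upper cSup_least simp: L_def)
qed

lemma dominated_linear_graph_extend:
  assumes G: "dominated_linear_graph p G" and x0: "\<forall>t. (x0, t) \<notin> G"
    and c1: "\<And>y t. (y, t) \<in> G \<Longrightarrow> t - p (y - x0) \<le> c"
    and c2: "\<And>y t. (y, t) \<in> G \<Longrightarrow> c \<le> p (y + x0) - t"
  shows "dominated_linear_graph p {(y + a *\<^sub>R x0, t + a * c) | y t a. (y, t) \<in> G}"
    (is "dominated_linear_graph p ?G'")
  unfolding dominated_linear_graph_def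
proof (intro conjI allI ballI impI)
  show "(0, 0) \<in> ?G'"
    using dominated_linear_graph_zero[OF G] by force
next
  fix u v assume "u \<in> ?G'" "v \<in> ?G'"
  then obtain y t a y' t' a' where u: "u = (y + a *\<^sub>R x0, t + a * c)" "(y, t) \<in> G"
    and v: "v = (y' + a' *\<^sub>R x0, t' + a' * c)" "(y', t') \<in> G" by blast
  have "u + v = ((y + y') + (a + a') *\<^sub>R x0, (t + t') + (a + a') * c)"
    by (simp add: u v scaleR_add_left distrib_right)
  then show "u + v \<in> ?G'"
    using dominated_linear_graph_add[OF G u(2) v(2)] by force
next
  fix r u assume "u \<in> ?G'"
  then obtain y t a where u: "u = (y + a *\<^sub>R x0, t + a * c)" "(y, t) \<in> G" by blast
  have "r *\<^sub>R u = (r *\<^sub>R y + (r * a) *\<^sub>R x0, r * t + (r * a) * c)"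
    by (simp add: u scaleR_add_right distrib_left)
  then show "r *\<^sub>R u \<in> ?G'"
    using dominated_linear_graph_scaleR[OF G u(2), of r] by force
next
  fix x s t assume "(x, s) \<in> ?G'" "(x, t) \<in> ?G'"
  then obtain y1 t1 a1 y2 t2 a2 where 1: "x = y1 + a1 *\<^sub>R x0" "s = t1 + a1 * c" "(y1, t1) \<in> G"
    and 2: "x = y2 + a2 *\<^sub>R x0" "t = t2 + a2 * c" "(y2, t2) \<in> G" by blast
  have "a1 = a2"
  proof (rule ccontr)
    assume "a1 \<noteq> a2"
    have "(y1 - y2, t1 - t2) \<in> G"
      using dominated_linear_graph_add[OF G 1(3) dominated_linear_graph_scaleR[OF G 2(3), of "-1"]] by simp
    from dominated_linear_graph_scaleR[OF G this, of "1 / (a2 - a1)"]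
    have "((1 / (a2 - a1)) *\<^sub>R (y1 - y2), (t1 - t2) / (a2 - a1)) \<in> G" by simp
    moreover have "y1 - y2 = (a2 - a1) *\<^sub>R x0" using 1(1) 2(1) by (simp add: algebra_simps)
    ultimately show False using x0 \<open>a1 \<noteq> a2\<close> by auto
  qed
  then show "s = t"
    using 1 2 dominated_linear_graph_unique[OF G, of y1 t1 t2] by simp
next
  fix x t assume "(x, t) \<in> ?G'"
  then obtain y t0 a where x: "x = y + a *\<^sub>R x0" and t: "t = t0 + a * c" and yG: "(y, t0) \<in> G"
    by blast
  consider "a < 0" | "a = 0" | "a > 0" by linarith
  then show "t \<le> p x"
  proof cases
    case 1
    have "((1 / - a) *\<^sub>R y, t0 / - a) \<in> G"
      using dominated_linear_graph_scaleR[OF G yG, of "1 / - a"] by simp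
    moreover have "(1 / - a) *\<^sub>R y - x0 = (1 / - a) *\<^sub>R (y + a *\<^sub>R x0)"
      using 1 by (simp add: algebra_simps)
    ultimately have "t0 / - a - p ((1 / - a) *\<^sub>R (y + a *\<^sub>R x0)) \<le> c"
      using c1 by metis
    then have "- a * (t0 / - a - p ((1 / - a) *\<^sub>R (y + a *\<^sub>R x0))) \<le> - a * c"
      using 1 by (intro mult_left_mono) auto
    then show ?thesis
      using 1 pos_homogeneous_divide[of "- a" "y + a *\<^sub>R x0"] by (simp add: x t algebra_simps)
  next
    case 2
    then show ?thesis using dominated_linear_graph_le[OF G yG] by (simp add: x t)
  next
    case 3
    have "((1 / a) *\<^sub>R y, t0 / a) \<in> G"
      using dominated_linear_graph_scaleR[OF G yG, of "1 / a"] by simp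
    moreover have "(1 / a) *\<^sub>R y + x0 = (1 / a) *\<^sub>R (y + a *\<^sub>R x0)"
      using 3 by (simp add: algebra_simps)
    ultimately have "c \<le> p ((1 / a) *\<^sub>R (y + a *\<^sub>R x0)) - t0 / a"
      using c2 by metis
    then have "a * c \<le> a * (p ((1 / a) *\<^sub>R (y + a *\<^sub>R x0)) - t0 / a)"
      using 3 by (intro mult_left_mono) auto
    then show ?thesis
      using 3 pos_homogeneous_divide[of a "y + a *\<^sub>R x0"] by (simp add: x t algebra_simps)
  qed
qed

lemma dominated_linear_graph_Union:
  assumes "C \<noteq> {}" and chain: "\<And>X Y. X \<in> C \<Longrightarrow> Y \<in> C \<Longrightarrow> X \<subseteq> Y \<or> Y \<subseteq> X"
    and good: "\<And>X. X \<in> C \<Longrightarrow> dominated_linear_graph p X"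
  shows "dominated_linear_graph p (\<Union>C)"
proof -
  have common: "\<exists>Z\<in>C. u \<in> Z \<and> v \<in> Z" if "u \<in> \<Union>C" "v \<in> \<Union>C" for u v
    using that chain by blast
  show ?thesis
    unfolding dominated_linear_graph_def
  proof (intro conjI allI ballI impI)
    show "(0, 0) \<in> \<Union>C" using \<open>C \<noteq> {}\<close> good dominated_linear_graph_zero by blast
    show "u + v \<in> \<Union>C" if "u \<in> \<Union>C" "v \<in> \<Union>C" for u v
      using common[OF that] good dominated_linear_graph_add by blast
    show "r *\<^sub>R u \<in> \<Union>C" if "u \<in> \<Union>C" for r u
      using that good dominated_linear_graph_scaleR by blast
    show "s = t" if "(x, s) \<in> \<Union>C" "(x, t) \<in> \<Union>C" for x s t
      using common[OF that] good dominated_linear_graph_unique by blast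
    show "t \<le> p x" if "(x, t) \<in> \<Union>C" for x t
      using that good dominated_linear_graph_le by blast
  qed
qed

theorem hahn_banach: "\<exists>l. linear l \<and> (\<forall>x. l x \<le> p x)"
proof -
  have "\<exists>M\<in>Collect (dominated_linear_graph p). \<forall>X\<in>Collect (dominated_linear_graph p). M \<subseteq> X \<longrightarrow> X = M"
  proof (rule Zorn_Lemma2, rule ballI)
    fix C assume C: "C \<in> chains (Collect (dominated_linear_graph p))"
    show "\<exists>U\<in>Collect (dominated_linear_graph p). \<forall>X\<in>C. X \<subseteq> U"
    proof (cases "C = {}")
      case True
      have "dominated_linear_graph p {(0, 0)}" by (simp add: dominated_linear_graph_def zero)
      then show ?thesis using True by blast
    next
      case False
      then have "dominated_linear_graph p (\<Union>C)"
        using C by (intro dominated_linear_graph_Union) (auto simp: chains_def chain_subset_def)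
      then show ?thesis by blast
    qed
  qed
  then obtain M where M: "dominated_linear_graph p M"
    and maximal: "\<And>X. dominated_linear_graph p X \<Longrightarrow> M \<subseteq> X \<Longrightarrow> X = M" by auto
  have total: "\<exists>t. (x, t) \<in> M" for x
  proof (rule ccontr)
    assume x: "\<nexists>t. (x, t) \<in> M"
    obtain c where "\<And>y t. (y, t) \<in> M \<Longrightarrow> t - p (y - x) \<le> c" "\<And>y t. (y, t) \<in> M \<Longrightarrow> c \<le> p (y + x) - t"
      using extension_constant_exists[OF M] by blast
    from dominated_linear_graph_extend[OF M _ this]
    have "dominated_linear_graph p {(y + a *\<^sub>R x, t + a * c) | y t a. (y, t) \<in> M}" using x by blast
    moreover have "M \<subseteq> {(y + a *\<^sub>R x, t + a * c) | y t a. (y, t) \<in> M}" by force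
    moreover have "(x, c) \<in> {(y + a *\<^sub>R x, t + a * c) | y t a. (y, t) \<in> M}"
      using dominated_linear_graph_zero[OF M] by force
    ultimately show False using maximal x by blast
  qed
  define l where "l x = (THE t. (x, t) \<in> M)" for x
  have l: "(x, l x) \<in> M" for x
    unfolding l_def using total[of x] dominated_linear_graph_unique[OF M]
    by (metis (mono_tags, lifting) theI)
  have "linear l"
  proof (rule linearI)
    show "l (x + y) = l x + l y" for x y
      using dominated_linear_graph_add[OF M l[of x] l[of y]]
        dominated_linear_graph_unique[OF M _ l[of "x + y"]] by simp
    show "l (r *\<^sub>R x) = r *\<^sub>R l x" for r x
      using dominated_linear_graph_scaleR[OF M l[of x], of r]
        dominated_linear_graph_unique[OF M _ l[of "r *\<^sub>R x"]] by simp
  qed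
  then show ?thesis using l dominated_linear_graph_le[OF M] by blast
qed

end

section \<open>An open mapping lemma for differences of convex sets\<close>

lemma sum_halves: "(\<Sum>k<n. (1::real) / 2 ^ Suc k) = 1 - 1 / 2 ^ n"
  by (induction n) (auto simp: field_simps)

lemma halving_series_in_closed_convex:
  fixes x :: "nat \<Rightarrow> 'a::banach"
  assumes K: "closed K" "convex K" and xK: "\<And>k. x k \<in> K" and bounded: "\<And>k. norm (x k) \<le> N"
  shows "summable (\<lambda>k. (1 / 2 ^ Suc k) *\<^sub>R x k)" and "(\<Sum>k. (1 / 2 ^ Suc k) *\<^sub>R x k) \<in> K"
proof -
  have bound: "norm ((1 / 2 ^ n) *\<^sub>R x m) \<le> N * (1 / 2) ^ n" for n m
    using bounded[of m] by (simp add: power_divide divide_right_mono)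
  show sum: "summable (\<lambda>k. (1 / 2 ^ Suc k) *\<^sub>R x k)"
  proof (rule summable_comparison_test)
    show "summable (\<lambda>k. N * (1 / 2) ^ Suc k)"
      by (intro summable_mult summable_ignore_initial_segment[where k=1] summable_geometric) simp
  qed (use bound in blast)
  \<comment> \<open>the partial sum plus the remaining weight put on the last term is a convex combination\<close>
  define y where "y n = (\<Sum>k<n. (1 / 2 ^ Suc k) *\<^sub>R x k) + (1 / 2 ^ n) *\<^sub>R x n" for n
  have yK: "y n \<in> K" for n
  proof -
    define w where "w k = (if k < n then (1::real) / 2 ^ Suc k else 1 / 2 ^ n)" for k
    have "(\<Sum>k<n. w k) = (\<Sum>k<n. (1::real) / 2 ^ Suc k)"
      "(\<Sum>k<n. w k *\<^sub>R x k) = (\<Sum>k<n. (1 / 2 ^ Suc k) *\<^sub>R x k)"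
      by (auto intro!: sum.cong simp: w_def)
    then have "sum w {..n} = 1" "(\<Sum>k\<le>n. w k *\<^sub>R x k) = y n"
      using sum_halves[of n] by (simp_all add: lessThan_Suc_atMost[symmetric] w_def y_def)
    moreover have "(\<Sum>k\<le>n. w k *\<^sub>R x k) \<in> K"
      using \<open>sum w {..n} = 1\<close> by (intro convex_sum[OF _ K(2)]) (auto simp: w_def xK)
    ultimately show ?thesis by simp
  qed
  have "(\<lambda>n. (1 / 2 ^ n) *\<^sub>R x n) \<longlonglongrightarrow> 0"
  proof (rule Lim_null_comparison[OF always_eventually])
    show "\<forall>n. norm ((1 / 2 ^ n) *\<^sub>R x n) \<le> N * (1 / 2) ^ n" using bound by blast
    show "(\<lambda>n. N * (1 / 2) ^ n) \<longlonglongrightarrow> 0" by (intro tendsto_mult_right_zero LIMSEQ_power_zero) simp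
  qed
  then have "y \<longlonglongrightarrow> (\<Sum>k. (1 / 2 ^ Suc k) *\<^sub>R x k) + 0"
    unfolding y_def by (intro tendsto_add summable_LIMSEQ[OF sum])
  then show "(\<Sum>k. (1 / 2 ^ Suc k) *\<^sub>R x k) \<in> K"
    using closed_sequentially[OF K(1), of y] yK by simp
qed

lemma halving_series_approximation:
  fixes D :: "'a::real_normed_vector set"
  assumes r: "r > 0" and D: "ball 0 r \<subseteq> closure D" and v: "norm v < r / 2"
  obtains d where "\<And>k. d k \<in> D" and "(\<lambda>n. \<Sum>k<n. (1 / 2 ^ Suc k) *\<^sub>R d k) \<longlonglongrightarrow> v"
proof -
  have "\<exists>d\<in>D. norm (w - d) < r / 2" if "w \<in> ball 0 r" for w
  proof -
    have "w \<in> closure D" using D that by blast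
    then obtain d where "d \<in> D" "dist d w < r / 2" using r by (meson closure_approachable half_gt_zero)
    then show ?thesis by (auto simp: dist_norm norm_minus_commute)
  qed
  then obtain F where F: "\<And>w. w \<in> ball 0 r \<Longrightarrow> F w \<in> D \<and> norm (w - F w) < r / 2" by metis
  \<comment> \<open>the rescaled remainders \<open>2 ^ Suc n *\<^sub>R (v - partial sum)\<close>\<close>
  define e where "e = rec_nat (2 *\<^sub>R v) (\<lambda>_ w. 2 *\<^sub>R (w - F w))"
  have e0: "e 0 = 2 *\<^sub>R v" and eSuc: "e (Suc n) = 2 *\<^sub>R (e n - F (e n))" for n
    unfolding e_def by simp_all
  have e: "e n \<in> ball 0 r" for n
  proof (induction n)
    case 0 then show ?case using v by (simp add: e0)
  next
    case (Suc n) then show ?case using F[OF Suc] by (simp add: eSuc)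
  qed
  have partial: "v = (\<Sum>k<n. (1 / 2 ^ Suc k) *\<^sub>R F (e k)) + (1 / 2 ^ Suc n) *\<^sub>R e n" for n
    by (induction n) (simp_all add: e0 eSuc algebra_simps)
  have "(\<lambda>n. (1 / 2 ^ Suc n) *\<^sub>R e n) \<longlonglongrightarrow> 0"
  proof (rule Lim_null_comparison[OF always_eventually])
    show "\<forall>n. norm ((1 / 2 ^ Suc n) *\<^sub>R e n) \<le> r * (1 / 2) ^ n"
    proof
      fix n
      have "norm (e n) \<le> r * 2" using e[of n] r by simp
      then show "norm ((1 / 2 ^ Suc n) *\<^sub>R e n) \<le> r * (1 / 2) ^ n"
        by (simp add: power_divide divide_simps)
    qed
    show "(\<lambda>n. r * (1 / 2) ^ n) \<longlonglongrightarrow> 0" by (intro tendsto_mult_right_zero LIMSEQ_power_zero) simp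
  qed
  then have "(\<lambda>n. v - (1 / 2 ^ Suc n) *\<^sub>R e n) \<longlonglongrightarrow> v - 0"
    by (intro tendsto_diff tendsto_const)
  moreover have "v - (1 / 2 ^ Suc n) *\<^sub>R e n = (\<Sum>k<n. (1 / 2 ^ Suc k) *\<^sub>R F (e k))" for n
    using partial[of n] by (metis add_diff_cancel)
  ultimately have "(\<lambda>n. \<Sum>k<n. (1 / 2 ^ Suc k) *\<^sub>R F (e k)) \<longlonglongrightarrow> v"
    by simp
  then show ?thesis by (rule that[rotated]) (use F e in blast)
qed

text \<open>As in the Robinson--Ursescu theorem: approximation errors are corrected at ever halved scale,
  and the corrections sum up as convex series inside the closed sets.\<close>

lemma ball_subset_set_diff_mk:
  fixes A C :: "'a::banach set"
  assumes A: "closed A" "convex A" "\<And>a. a \<in> A \<Longrightarrow> norm a \<le> N"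
    and C: "closed C" "convex C" "\<And>c. c \<in> C \<Longrightarrow> norm c \<le> N"
    and r: "r > 0" and dense: "ball 0 r \<subseteq> closure (set_diff_mk A C)"
  shows "ball 0 (r / 2) \<subseteq> set_diff_mk A C"
proof
  fix v :: 'a assume "v \<in> ball 0 (r / 2)"
  then obtain d where d: "\<And>k. d k \<in> set_diff_mk A C"
    and lim: "(\<lambda>n. \<Sum>k<n. (1 / 2 ^ Suc k) *\<^sub>R d k) \<longlonglongrightarrow> v"
    using halving_series_approximation[OF r dense] by auto
  have "\<forall>k. \<exists>ac. fst ac \<in> A \<and> snd ac \<in> C \<and> d k = fst ac - snd ac"
    using d unfolding set_diff_mk_def by force
  then obtain ac where "\<forall>k. fst (ac k) \<in> A \<and> snd (ac k) \<in> C \<and> d k = fst (ac k) - snd (ac k)"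
    by (rule choice[THEN exE])
  then obtain a c where ac: "\<And>k. a k \<in> A" "\<And>k. c k \<in> C" "\<And>k. d k = a k - c k"
    by (metis comp_apply)
  have "norm (a k) \<le> N" "norm (c k) \<le> N" for k using A(3) C(3) ac by auto
  note a = halving_series_in_closed_convex[of A a N, OF A(1,2) ac(1) this(1)]
    and c = halving_series_in_closed_convex[of C c N, OF C(1,2) ac(2) this(2)]
  have "(\<lambda>n. \<Sum>k<n. (1 / 2 ^ Suc k) *\<^sub>R d k)
          \<longlonglongrightarrow> (\<Sum>k. (1 / 2 ^ Suc k) *\<^sub>R a k) - (\<Sum>k. (1 / 2 ^ Suc k) *\<^sub>R c k)"
    using tendsto_diff[OF summable_LIMSEQ[OF a(1)] summable_LIMSEQ[OF c(1)]]
    by (simp add: ac(3) scaleR_diff_right sum_subtractf)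
  with lim have "v = (\<Sum>k. (1 / 2 ^ Suc k) *\<^sub>R a k) - (\<Sum>k. (1 / 2 ^ Suc k) *\<^sub>R c k)"
    using LIMSEQ_unique by blast
  then show "v \<in> set_diff_mk A C" using a(2) c(2) unfolding set_diff_mk_def by blast
qed

section \<open>The Attouch--Brezis theorem\<close>

lemma convex_set_diff_mk: "convex A \<Longrightarrow> convex C \<Longrightarrow> convex (set_diff_mk A C)"
proof -
  have "set_diff_mk A C = (\<Union>a\<in>A. \<Union>c\<in>C. {a - c})" unfolding set_diff_mk_def by blast
  then show "convex A \<Longrightarrow> convex C \<Longrightarrow> convex (set_diff_mk A C)" by (simp add: convex_differences)
qed

lemma Baire_interior_closure_nonempty:
  fixes S :: "nat \<Rightarrow> 'a::banach set"
  assumes "(\<Union>n. S n) = UNIV"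
  shows "\<exists>n. interior (closure (S n)) \<noteq> {}"
proof (rule ccontr)
  assume "\<nexists>n. interior (closure (S n)) \<noteq> {}"
  then have "euclidean interior_of (\<Union>n. closure (S n)) = {}"
    by (intro Baire_category_alt) (auto simp: completely_metrizable_space_euclidean closed_closedin[symmetric])
  moreover have "(\<Union>n. closure (S n)) = UNIV" using assms closure_subset by blast
  ultimately show False by simp
qed

lemma ereal_add_le_realE:
  fixes x y :: ereal
  assumes "x \<noteq> -\<infinity>" "y \<noteq> -\<infinity>" "x + y \<le> ereal r"
  obtains a b where "x = ereal a" "y = ereal b" "a + b \<le> r"
  using assms by (cases x; cases y) auto

lemma convex_fun_le_real:
  assumes "convex_fun h" "0 \<le> t" "t \<le> 1" "h x = ereal a" "h y = ereal b"
  shows "h (t *\<^sub>R x + (1 - t) *\<^sub>R y) \<le> ereal (t * a + (1 - t) * b)"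
proof (cases "t = 0 \<or> t = 1")
  case True then show ?thesis using assms by auto
next
  case False
  then have "h (t *\<^sub>R x + (1 - t) *\<^sub>R y) \<le> ereal t * h x + ereal (1 - t) * h y"
    using assms(1-3) unfolding convex_fun_def by auto
  then show ?thesis using assms(4,5) by simp
qed

definition bounded_sublevel :: "('a::real_normed_vector \<Rightarrow> ereal) \<Rightarrow> real \<Rightarrow> 'a set" where
  "bounded_sublevel h N = {a. norm a \<le> N \<and> h a \<le> ereal N}"

lemma closed_bounded_sublevel:
  assumes "\<And>t. closed {a. h a \<le> ereal t}"
  shows "closed (bounded_sublevel h N)"
proof -
  have "bounded_sublevel h N = cball 0 N \<inter> {a. h a \<le> ereal N}" by (auto simp: bounded_sublevel_def)
  then show ?thesis using assms by (simp add: closed_Int)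
qed

lemma bounded_sublevel_mono: "N \<le> N' \<Longrightarrow> bounded_sublevel h N \<subseteq> bounded_sublevel h N'"
  unfolding bounded_sublevel_def by (auto intro: order_trans)

lemma convex_bounded_sublevel:
  assumes h: "convex_fun h" "\<And>a. h a \<noteq> -\<infinity>"
  shows "convex (bounded_sublevel h N)"
proof (rule convexI)
  fix x y :: 'a and u v :: real
  assume x: "x \<in> bounded_sublevel h N" and y: "y \<in> bounded_sublevel h N"
    and u: "0 \<le> u" and v: "0 \<le> v" and uv: "u + v = 1"
  obtain a where a: "h x = ereal a" "a \<le> N" "norm x \<le> N"
    using x h(2)[of x] unfolding bounded_sublevel_def by (cases "h x") auto
  obtain b where b: "h y = ereal b" "b \<le> N" "norm y \<le> N"
    using y h(2)[of y] unfolding bounded_sublevel_def by (cases "h y") auto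
  have "norm (u *\<^sub>R x + v *\<^sub>R y) \<le> u * norm x + v * norm y"
    using norm_triangle_ineq[of "u *\<^sub>R x" "v *\<^sub>R y"] u v by simp
  also have "\<dots> \<le> u * N + v * N" using a b u v by (intro add_mono mult_left_mono) auto
  finally have "norm (u *\<^sub>R x + v *\<^sub>R y) \<le> N" using uv by (simp add: distrib_right[symmetric])
  moreover have "h (u *\<^sub>R x + v *\<^sub>R y) \<le> ereal (u * a + v * b)"
    using convex_fun_le_real[OF h(1) u _ a(1) b(1)] uv v by (simp add: eq_diff_eq[symmetric])
  moreover have "u * a + v * b \<le> u * N + v * N" using a b u v by (intro add_mono mult_left_mono)
  ultimately show "u *\<^sub>R x + v *\<^sub>R y \<in> bounded_sublevel h N"
    using uv unfolding bounded_sublevel_def by (auto simp: distrib_right[symmetric] intro: order_trans)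
qed

text \<open>A slope \<open>\<mu> \<in> coupling_slopes \<phi> \<psi> m u\<close> bounds the infimal convolution
  \<open>w \<mapsto> inf {\<phi> a + \<psi> c | a - c = w}\<close> at some point \<open>t *\<^sub>R u\<close> of the ray through \<open>u\<close> by
  \<open>m + t * \<mu>\<close>.\<close>

definition coupling_slopes :: "('a::real_vector \<Rightarrow> ereal) \<Rightarrow> ('a \<Rightarrow> ereal) \<Rightarrow> real \<Rightarrow> 'a \<Rightarrow> real set" where
  "coupling_slopes \<phi> \<psi> m u = {\<mu>. \<exists>t>0. \<exists>a c. t *\<^sub>R u = a - c \<and> \<phi> a + \<psi> c \<le> ereal (m + t * \<mu>)}"

lemma coupling_slopesI:
  "t > 0 \<Longrightarrow> t *\<^sub>R u = a - c \<Longrightarrow> \<phi> a + \<psi> c \<le> ereal (m + t * \<mu>) \<Longrightarrow> \<mu> \<in> coupling_slopes \<phi> \<psi> m u"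
  unfolding coupling_slopes_def by blast

lemma coupling_slopes_scaleR:
  assumes "\<mu> \<in> coupling_slopes \<phi> \<psi> m u" "c > 0"
  shows "c * \<mu> \<in> coupling_slopes \<phi> \<psi> m (c *\<^sub>R u)"
proof -
  obtain t a d where t: "t > 0" "t *\<^sub>R u = a - d" "\<phi> a + \<psi> d \<le> ereal (m + t * \<mu>)"
    using assms(1) unfolding coupling_slopes_def by blast
  show ?thesis
    by (rule coupling_slopesI[of "t / c" _ a d]) (use t assms(2) in auto)
qed

context
  fixes \<phi> \<psi> :: "'a::banach \<Rightarrow> ereal"
  assumes \<phi>_proper: "\<And>a. \<phi> a \<noteq> -\<infinity>" and \<psi>_proper: "\<And>a. \<psi> a \<noteq> -\<infinity>"
    and \<phi>_convex: "convex_fun \<phi>" and \<psi>_convex: "convex_fun \<psi>"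
begin

lemma coupling_slopes_add:
  assumes \<mu>: "\<mu> \<in> coupling_slopes \<phi> \<psi> m u" and \<nu>: "\<nu> \<in> coupling_slopes \<phi> \<psi> m v"
  shows "\<mu> + \<nu> \<in> coupling_slopes \<phi> \<psi> m (u + v)"
proof -
  obtain t a c where t: "t > 0" "t *\<^sub>R u = a - c" "\<phi> a + \<psi> c \<le> ereal (m + t * \<mu>)"
    using \<mu> unfolding coupling_slopes_def by blast
  obtain s a' c' where s: "s > 0" "s *\<^sub>R v = a' - c'" "\<phi> a' + \<psi> c' \<le> ereal (m + s * \<nu>)"
    using \<nu> unfolding coupling_slopes_def by blast
  obtain pa pc where p: "\<phi> a = ereal pa" "\<psi> c = ereal pc" "pa + pc \<le> m + t * \<mu>"
    using ereal_add_le_realE[OF \<phi>_proper \<psi>_proper t(3)] by blast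
  obtain pa' pc' where p': "\<phi> a' = ereal pa'" "\<psi> c' = ereal pc'" "pa' + pc' \<le> m + s * \<nu>"
    using ereal_add_le_realE[OF \<phi>_proper \<psi>_proper s(3)] by blast
  \<comment> \<open>the convex combination with weights \<open>s, t\<close> meets the ray through \<open>u + v\<close> at parameter \<open>r\<close>\<close>
  define w where "w = s / (t + s)"
  define r where "r = t * s / (t + s)"
  have w: "0 \<le> w" "w \<le> 1" "w * t = r" "(1 - w) * s = r" and "r > 0"
    using t s by (auto simp: w_def r_def field_simps)
  have ray: "r *\<^sub>R (u + v) = (w *\<^sub>R a + (1 - w) *\<^sub>R a') - (w *\<^sub>R c + (1 - w) *\<^sub>R c')"
  proof -
    have "r *\<^sub>R (u + v) = w *\<^sub>R (t *\<^sub>R u) + (1 - w) *\<^sub>R (s *\<^sub>R v)"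
      using w by (simp add: scaleR_add_right)
    then show ?thesis unfolding t(2) s(2) by (simp add: algebra_simps)
  qed
  have combination: "w * (pa + pc) + (1 - w) * (pa' + pc') \<le> m + r * (\<mu> + \<nu>)"
  proof -
    have "w * (pa + pc) + (1 - w) * (pa' + pc') \<le> w * (m + t * \<mu>) + (1 - w) * (m + s * \<nu>)"
      using add_mono[OF mult_left_mono[OF p(3) w(1)] mult_left_mono[OF p'(3), of "1 - w"]] w(2) by simp
    also have "\<dots> = m + r * (\<mu> + \<nu>)"
      using w(3,4) by (simp add: algebra_simps) (metis mult.assoc distrib_left)
    finally show ?thesis .
  qed
  have "\<phi> (w *\<^sub>R a + (1 - w) *\<^sub>R a') + \<psi> (w *\<^sub>R c + (1 - w) *\<^sub>R c')
      \<le> ereal (w * pa + (1 - w) * pa') + ereal (w * pc + (1 - w) * pc')"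
    by (intro add_mono convex_fun_le_real \<phi>_convex \<psi>_convex w(1,2) p(1,2) p'(1,2))
  also have "\<dots> = ereal (w * (pa + pc) + (1 - w) * (pa' + pc'))" by (simp add: algebra_simps)
  also have "\<dots> \<le> ereal (m + r * (\<mu> + \<nu>))" using combination by simp
  finally have "\<phi> (w *\<^sub>R a + (1 - w) *\<^sub>R a') + \<psi> (w *\<^sub>R c + (1 - w) *\<^sub>R c') \<le> ereal (m + r * (\<mu> + \<nu>))" .
  then show ?thesis using \<open>r > 0\<close> ray by (intro coupling_slopesI)
qed

lemma coupling_slopes_nonempty:
  assumes dom: "set_diff_mk (edom \<phi>) (edom \<psi>) = UNIV"
  shows "coupling_slopes \<phi> \<psi> m u \<noteq> {}"
proof -
  obtain a c where ac: "u = a - c" "a \<in> edom \<phi>" "c \<in> edom \<psi>"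
    using dom unfolding set_diff_mk_def by blast
  then obtain pa pc where "\<phi> a = ereal pa" "\<psi> c = ereal pc"
    unfolding edom_def by (cases "\<phi> a"; cases "\<psi> c") auto
  then have "pa + pc - m \<in> coupling_slopes \<phi> \<psi> m u"
    using ac by (intro coupling_slopesI[of 1 _ a c]) auto
  then show ?thesis by blast
qed

lemma coupling_slopes_zero_nonneg:
  assumes below: "\<And>a. ereal m \<le> \<phi> a + \<psi> a" and \<mu>: "\<mu> \<in> coupling_slopes \<phi> \<psi> m 0"
  shows "0 \<le> \<mu>"
proof -
  obtain t a c where t: "t > 0" "t *\<^sub>R 0 = a - c" "\<phi> a + \<psi> c \<le> ereal (m + t * \<mu>)"
    using \<mu> unfolding coupling_slopes_def by blast
  have "a = c" using t(2) by simp
  with t(3) have "\<phi> c + \<psi> c \<le> ereal (m + t * \<mu>)" by simp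
  with below[of c] have "ereal m \<le> ereal (m + t * \<mu>)" by (rule order_trans)
  then show ?thesis using t(1) by (simp add: zero_le_mult_iff)
qed

lemma bdd_below_coupling_slopes:
  assumes dom: "set_diff_mk (edom \<phi>) (edom \<psi>) = UNIV" and below: "\<And>a. ereal m \<le> \<phi> a + \<psi> a"
  shows "bdd_below (coupling_slopes \<phi> \<psi> m u)"
proof -
  obtain \<nu> where \<nu>: "\<nu> \<in> coupling_slopes \<phi> \<psi> m (- u)" using coupling_slopes_nonempty[OF dom] by blast
  have "- \<nu> \<le> \<mu>" if "\<mu> \<in> coupling_slopes \<phi> \<psi> m u" for \<mu>
  proof -
    have "\<mu> + \<nu> \<in> coupling_slopes \<phi> \<psi> m 0" using coupling_slopes_add[OF that \<nu>] by simp
    then show ?thesis using coupling_slopes_zero_nonneg[OF below] by fastforce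
  qed
  then show ?thesis unfolding bdd_below_def by blast
qed

lemma sublinear_functional_Inf_coupling_slopes:
  assumes dom: "set_diff_mk (edom \<phi>) (edom \<psi>) = UNIV" and below: "\<And>a. ereal m \<le> \<phi> a + \<psi> a"
  shows "sublinear_functional (\<lambda>u. Inf (coupling_slopes \<phi> \<psi> m u))"
proof -
  let ?Q = "coupling_slopes \<phi> \<psi> m" and ?P = "\<lambda>u. Inf (coupling_slopes \<phi> \<psi> m u)"
  have lower: "?P u \<le> \<mu>" if "\<mu> \<in> ?Q u" for u \<mu>
    using that bdd_below_coupling_slopes[OF dom below] by (intro cInf_lower)
  have greatest: "x \<le> ?P u" if "\<And>\<mu>. \<mu> \<in> ?Q u \<Longrightarrow> x \<le> \<mu>" for x u
    using that coupling_slopes_nonempty[OF dom] by (intro cInf_greatest)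
  have scale_le: "?P (c *\<^sub>R u) \<le> c * ?P u" if "c > 0" for c u
  proof -
    have "?P (c *\<^sub>R u) / c \<le> ?P u"
      using lower[OF coupling_slopes_scaleR[OF _ that]] that
      by (intro greatest) (simp add: divide_simps mult.commute)
    then show ?thesis using that by (simp add: divide_simps mult.commute)
  qed
  show ?thesis
  proof
    fix u v
    have "?P (u + v) - ?P u \<le> \<nu>" if \<nu>: "\<nu> \<in> ?Q v" for \<nu>
    proof -
      have "?P (u + v) - \<nu> \<le> ?P u"
        using lower[OF coupling_slopes_add[OF _ \<nu>]] by (intro greatest) (simp add: algebra_simps)
      then show ?thesis by simp
    qed
    then show "?P (u + v) \<le> ?P u + ?P v" using greatest by fastforce
  next
    fix c :: real and u assume c: "c > 0"
    have "?P u \<le> (1 / c) * ?P (c *\<^sub>R u)" using scale_le[of "1 / c" "c *\<^sub>R u"] c by simp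
    then show "?P (c *\<^sub>R u) = c * ?P u"
      using scale_le[OF c, of u] c by (simp add: divide_simps mult.commute)
  qed
qed

lemma ball_subset_set_diff_bounded_sublevel:
  assumes \<phi>_closed: "\<And>t. closed {a. \<phi> a \<le> ereal t}" and \<psi>_closed: "\<And>t. closed {a. \<psi> a \<le> ereal t}"
    and dom: "set_diff_mk (edom \<phi>) (edom \<psi>) = UNIV"
  obtains N \<delta> where "\<delta> > 0" "ball 0 \<delta> \<subseteq> set_diff_mk (bounded_sublevel \<phi> N) (bounded_sublevel \<psi> N)"
proof -
  define S where "S N = set_diff_mk (bounded_sublevel \<phi> N) (bounded_sublevel \<psi> N)" for N
  have S_mono: "S N \<subseteq> S N'" if "N \<le> N'" for N N'
    using bounded_sublevel_mono[OF that] unfolding S_def set_diff_mk_def by blast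
  have S_convex: "convex (S N)" for N
    unfolding S_def using \<phi>_convex \<phi>_proper \<psi>_convex \<psi>_proper
    by (intro convex_set_diff_mk convex_bounded_sublevel)
  have S_cover: "\<exists>n::nat. u \<in> S n" for u
  proof -
    obtain a c where ac: "u = a - c" "a \<in> edom \<phi>" "c \<in> edom \<psi>"
      using dom unfolding set_diff_mk_def by blast
    then obtain pa pc where "\<phi> a = ereal pa" "\<psi> c = ereal pc"
      unfolding edom_def by (cases "\<phi> a"; cases "\<psi> c") auto
    moreover define n where "n = nat \<lceil>max (max (norm a) (norm c)) (max pa pc)\<rceil>"
    moreover have "max (max (norm a) (norm c)) (max pa pc) \<le> real n"
      unfolding n_def by linarith
    ultimately have "a \<in> bounded_sublevel \<phi> n" "c \<in> bounded_sublevel \<psi> n"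
      unfolding bounded_sublevel_def by auto
    then show ?thesis using ac(1) unfolding S_def set_diff_mk_def by blast
  qed
  obtain n1 :: nat where "interior (closure (S n1)) \<noteq> {}"
    using Baire_interior_closure_nonempty[of "\<lambda>n. S (real n)"] S_cover by blast
  then obtain u0 \<epsilon> where \<epsilon>: "\<epsilon> > 0" "ball u0 \<epsilon> \<subseteq> closure (S n1)"
    by (meson ex_in_conv mem_interior)
  obtain n2 :: nat where n2: "- u0 \<in> S n2" using S_cover by blast
  define N where "N = real (max n1 n2)"
  \<comment> \<open>by convexity the ball around \<open>u0\<close> and the point \<open>- u0\<close> give a ball around 0\<close>
  have "ball 0 (\<epsilon> / 2) \<subseteq> closure (S N)"
  proof
    fix v :: 'a assume "v \<in> ball 0 (\<epsilon> / 2)"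
    then have "2 *\<^sub>R v + u0 \<in> ball u0 \<epsilon>" by (simp add: dist_norm)
    then have "2 *\<^sub>R v + u0 \<in> closure (S N)"
      using \<epsilon>(2) closure_mono[OF S_mono[of n1 N]] unfolding N_def by auto
    moreover have "- u0 \<in> closure (S N)"
      using n2 closure_subset S_mono[of n2 N] unfolding N_def by auto
    ultimately have "(1 / 2) *\<^sub>R (2 *\<^sub>R v + u0) + (1 / 2) *\<^sub>R (- u0) \<in> closure (S N)"
      by (intro convexD[OF convex_closure[OF S_convex]]) auto
    then show "v \<in> closure (S N)" by (simp add: algebra_simps)
  qed
  then have "ball 0 (\<epsilon> / 2 / 2) \<subseteq> S N"
    unfolding S_def using \<epsilon>(1) \<phi>_convex \<phi>_proper \<psi>_convex \<psi>_proper
    by (intro ball_subset_set_diff_mk[where N=N] closed_bounded_sublevel \<phi>_closed \<psi>_closed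
        convex_bounded_sublevel) (auto simp: bounded_sublevel_def)
  with \<epsilon>(1) show ?thesis unfolding S_def by (intro that[of "\<epsilon> / 2 / 2"]) auto
qed

end

lemma bounded_linear_if_bounded_above_on_ball:
  fixes l :: "'a::real_normed_vector \<Rightarrow> real"
  assumes l: "linear l" and \<delta>: "\<delta> > 0" and bound: "\<And>u. u \<in> ball 0 \<delta> \<Longrightarrow> l u \<le> K"
  shows "bounded_linear l"
proof -
  have "\<bar>l x\<bar> \<le> norm x * (2 * K / \<delta>)" for x
  proof (cases "x = 0")
    case True then show ?thesis using l by (simp add: linear_0)
  next
    case False
    define w where "w = (\<delta> / 2 / norm x) *\<^sub>R x"
    have "w \<in> ball 0 \<delta>" "- w \<in> ball 0 \<delta>" using False \<delta> by (auto simp: w_def)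
    then have "l w \<le> K" "- l w \<le> K" using bound by (auto simp: linear_neg[OF l, symmetric])
    then have "\<bar>l w\<bar> \<le> K" by simp
    moreover have "l w = (\<delta> / 2 / norm x) * l x" unfolding w_def by (simp add: linear_scale[OF l])
    ultimately show ?thesis using False \<delta> by (simp add: abs_mult field_simps)
  qed
  then show ?thesis
    using l by (intro bounded_linear_intro[where K="2 * K / \<delta>"]) (auto simp: linear_add linear_scale)
qed

theorem attouch_brezis:
  fixes \<phi> \<psi> :: "'a::banach \<Rightarrow> ereal"
  assumes \<phi>: "\<And>a. \<phi> a \<noteq> -\<infinity>" "convex_fun \<phi>" "\<And>t. closed {a. \<phi> a \<le> ereal t}"
    and \<psi>: "\<And>a. \<psi> a \<noteq> -\<infinity>" "convex_fun \<psi>" "\<And>t. closed {a. \<psi> a \<le> ereal t}"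
    and dom: "set_diff_mk (edom \<phi>) (edom \<psi>) = UNIV"
    and below: "\<And>a. ereal m \<le> \<phi> a + \<psi> a"
  shows "\<exists>l. bounded_linear l \<and> (\<forall>a c. ereal (m + l (a - c)) \<le> \<phi> a + \<psi> c)"
proof -
  let ?Q = "coupling_slopes \<phi> \<psi> m"
  have lower: "Inf (?Q u) \<le> \<mu>" if "\<mu> \<in> ?Q u" for u \<mu>
    using that bdd_below_coupling_slopes[OF \<phi>(1) \<psi>(1) \<phi>(2) \<psi>(2) dom below] by (intro cInf_lower)
  obtain l where l: "linear l" "\<And>u. l u \<le> Inf (?Q u)"
    using sublinear_functional.hahn_banach[OF sublinear_functional_Inf_coupling_slopes[OF \<phi>(1) \<psi>(1) \<phi>(2) \<psi>(2) dom below]]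
    by blast
  obtain N \<delta> where \<delta>: "\<delta> > 0" "ball 0 \<delta> \<subseteq> set_diff_mk (bounded_sublevel \<phi> N) (bounded_sublevel \<psi> N)"
    using ball_subset_set_diff_bounded_sublevel[OF \<phi>(1) \<psi>(1) \<phi>(2) \<psi>(2) \<phi>(3) \<psi>(3) dom] by blast
  have "l u \<le> 2 * N - m" if u: "u \<in> ball 0 \<delta>" for u
  proof -
    obtain a c where ac: "u = a - c" "a \<in> bounded_sublevel \<phi> N" "c \<in> bounded_sublevel \<psi> N"
      using \<delta>(2) u unfolding set_diff_mk_def by blast
    then have "\<phi> a + \<psi> c \<le> ereal N + ereal N" by (intro add_mono) (auto simp: bounded_sublevel_def)
    then have "2 * N - m \<in> ?Q u" using ac(1) by (intro coupling_slopesI[of 1 _ a c]) auto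
    then show ?thesis using l(2) lower order_trans by blast
  qed
  then have "bounded_linear l" by (rule bounded_linear_if_bounded_above_on_ball[OF l(1) \<delta>(1)])
  moreover have "ereal (m + l (a - c)) \<le> \<phi> a + \<psi> c" for a c
  proof (cases "\<phi> a + \<psi> c")
    case (real r)
    then have "r - m \<in> ?Q (a - c)" by (intro coupling_slopesI[of 1 _ a c]) auto
    then have "l (a - c) \<le> r - m" using l(2)[of "a - c"] lower by fastforce
    then show ?thesis using real by simp
  qed (use \<phi>(1) \<psi>(1) in auto)
  ultimately show ?thesis by blast
qed

section \<open>BC--functions on SSDB spaces\<close>

lemma closed_lsc_le:
  fixes f :: "'a::t2_space \<Rightarrow> ereal"
  assumes lsc: "lsc_fun f" and h: "\<And>x. isCont h x"
  shows "closed {a. f a \<le> ereal (h a)}"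
proof -
  have "eventually (\<lambda>y. ereal (h y) < f y) (nhds x)" if x: "ereal (h x) < f x" for x
  proof -
    obtain r where r: "h x < r" "ereal r < f x" using ereal_dense2[OF x] by (metis ereal_less_eq(3) not_le)
    have "eventually (\<lambda>y. ereal r < f y) (at x)"
      using r(2) lsc unfolding lsc_fun_def by (intro less_LiminfD) (meson less_le_trans)
    moreover have "eventually (\<lambda>y. h y < r) (at x)"
      using h[of x] r(1) unfolding isCont_def by (intro order_tendstoD(2))
    ultimately have "eventually (\<lambda>y. ereal (h y) < f y) (at x)"
      by eventually_elim (rule le_less_trans[of _ "ereal r"]; simp)
    then show ?thesis using x by (simp add: eventually_nhds_conv_at)
  qed
  then have "open {a. ereal (h a) < f a}"
    unfolding open_subopen[of "{a. ereal (h a) < f a}"] eventually_nhds by fastforce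
  moreover have "{a. f a \<le> ereal (h a)} = - {a. ereal (h a) < f a}" by (auto simp: not_less)
  ultimately show ?thesis by (simp add: closed_def)
qed

lemma convex_fun_diff_linear:
  assumes f: "convex_fun f" "\<And>a. f a \<noteq> -\<infinity>" and L: "linear L"
  shows "convex_fun (\<lambda>a. f a - ereal (L a))"
  unfolding convex_fun_def
proof (intro allI impI)
  fix x y and t :: real assume t: "0 < t \<and> t < 1"
  show "f (t *\<^sub>R x + (1 - t) *\<^sub>R y) - ereal (L (t *\<^sub>R x + (1 - t) *\<^sub>R y))
        \<le> ereal t * (f x - ereal (L x)) + ereal (1 - t) * (f y - ereal (L y))"
  proof (cases "f x = \<infinity> \<or> f y = \<infinity>")
    case True
    then show ?thesis using t f(2)[of x] f(2)[of y] by (auto simp: ereal_mult_infty)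
  next
    case False
    then obtain a b where ab: "f x = ereal a" "f y = ereal b" using f(2)[of x] f(2)[of y]
      by (cases "f x"; cases "f y") auto
    have "f (t *\<^sub>R x + (1 - t) *\<^sub>R y) \<le> ereal (t * a + (1 - t) * b)"
      using convex_fun_le_real[OF f(1) _ _ ab] t by simp
    moreover have "L (t *\<^sub>R x + (1 - t) *\<^sub>R y) = t * L x + (1 - t) * L y"
      using L by (simp add: linear_add linear_scale)
    ultimately show ?thesis unfolding ab
      by (cases "f (t *\<^sub>R x + (1 - t) *\<^sub>R y)") (auto simp: algebra_simps)
  qed
qed

lemma convex_fun_comp_linear_diff:
  assumes g: "convex_fun g" and L: "linear L"
  shows "convex_fun (\<lambda>c. g (L (c - x)))"
  unfolding convex_fun_def
proof (intro allI impI)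
  fix a b and t :: real assume t: "0 < t \<and> t < 1"
  have "L (t *\<^sub>R a + (1 - t) *\<^sub>R b - x) = t *\<^sub>R L (a - x) + (1 - t) *\<^sub>R L (b - x)"
    using L by (simp add: algebra_simps linear_add linear_scale linear_diff)
  then show "g (L (t *\<^sub>R a + (1 - t) *\<^sub>R b - x)) \<le> ereal t * g (L (a - x)) + ereal (1 - t) * g (L (b - x))"
    using g t unfolding convex_fun_def by simp
qed

lemma SSDB_sym: "SSDB s \<Longrightarrow> s b c = s c b"
  unfolding SSDB_def by blast

lemma SSDB_bounded_linear_left:
  assumes "SSDB s" shows "bounded_linear (\<lambda>b. s b c)"
proof -
  obtain \<iota> :: "'a \<Rightarrow> ('a \<Rightarrow>\<^sub>L real)" where "\<forall>b c. blinfun_apply (\<iota> c) b = s b c"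
    using assms unfolding SSDB_def by blast
  then have "(\<lambda>b. s b c) = blinfun_apply (\<iota> c)" by auto
  then show ?thesis by (simp add: blinfun.bounded_linear_right)
qed

lemma SSDB_represents_dual:
  assumes "SSDB s" "bounded_linear l"
  obtains z where "\<And>b. l b = s b z"
proof -
  obtain \<iota> :: "'a \<Rightarrow> ('a \<Rightarrow>\<^sub>L real)" where \<iota>: "\<forall>b c. blinfun_apply (\<iota> c) b = s b c" and "surj \<iota>"
    using assms(1) unfolding SSDB_def by blast
  then obtain z where "Blinfun l = \<iota> z" by (metis surjD)
  then show ?thesis using that \<iota> bounded_linear_Blinfun_apply[OF assms(2)] by metis
qed

lemma SSDB_bilinear:
  assumes "SSDB s"
  shows "s (a + b) c = s a c + s b c" "s (a - b) c = s a c - s b c" "s (- a) c = - s a c"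
    and "s c (a + b) = s c a + s c b" "s c (a - b) = s c a - s c b" "s c (- a) = - s c a"
proof -
  have l: "linear (\<lambda>b. s b c)" for c using SSDB_bounded_linear_left[OF assms] bounded_linear.linear by blast
  show "s (a + b) c = s a c + s b c" "s (a - b) c = s a c - s b c" "s (- a) c = - s a c"
    using linear_add[OF l] linear_diff[OF l] linear_neg[OF l] by auto
  then show "s c (a + b) = s c a + s c b" "s c (a - b) = s c a - s c b" "s c (- a) = - s c a"
    using SSDB_sym[OF assms] by metis+
qed

lemma fenchel_at_le_qf_if_coupled:
  assumes f: "\<And>a. f a \<noteq> -\<infinity>" and g: "\<And>d. g d \<noteq> -\<infinity>" "ereal (qf s v) \<le> fenchel_at s g v"
    and coupled: "\<And>a d. ereal (s a u + s d v - (qf s u + qf s v)) \<le> f a + g d"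
  shows "fenchel_at s f u \<le> ereal (qf s u)"
  unfolding fenchel_at_def
proof (rule SUP_least)
  fix a
  show "ereal (s a u) - f a \<le> ereal (qf s u)"
  proof (cases "f a")
    case (real r)
    have "fenchel_at s g v \<le> ereal (qf s u + qf s v - s a u + r)"
      unfolding fenchel_at_def
    proof (rule SUP_least)
      fix d show "ereal (s d v) - g d \<le> ereal (qf s u + qf s v - s a u + r)"
        using coupled[of a d] g(1)[of d] real by (cases "g d") auto
    qed
    with g(2) have "qf s v \<le> qf s u + qf s v - s a u + r" by (metis ereal_less_eq(3) order_trans)
    then show ?thesis using real by simp
  qed (use f in auto)
qed

lemma Pq_if_coupled:
  assumes f: "BC_fun s f" and g: "BC_fun s g"
    and coupled: "\<And>a d. ereal (s a u + s d v - (qf s u + qf s v)) \<le> f a + g d"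
  shows "u \<in> Pq s f" "v \<in> Pq s g"
proof -
  have f_proper: "\<And>a. f a \<noteq> -\<infinity>" and g_proper: "\<And>a. g a \<noteq> -\<infinity>"
    using f g unfolding BC_fun_def proper_fun_def by blast+
  have f_bounds: "\<And>b. ereal (qf s b) \<le> f b" "\<And>b. f b \<le> fenchel_at s f b"
    and g_bounds: "\<And>b. ereal (qf s b) \<le> g b" "\<And>b. g b \<le> fenchel_at s g b"
    using f g unfolding BC_fun_def by blast+
  have "fenchel_at s f u \<le> ereal (qf s u)"
    using f_proper g_proper order_trans[OF g_bounds] coupled by (rule fenchel_at_le_qf_if_coupled)
  then show "u \<in> Pq s f"
    unfolding Pq_def using f_bounds[of u] by (auto intro: antisym order_trans)
  have "ereal (s d v + s a u - (qf s v + qf s u)) \<le> g d + f a" for a d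
    using coupled[of a d] by (simp add: ac_simps)
  with g_proper f_proper order_trans[OF f_bounds]
  have "fenchel_at s g v \<le> ereal (qf s v)" by (rule fenchel_at_le_qf_if_coupled)
  then show "v \<in> Pq s g"
    unfolding Pq_def using g_bounds[of v] by (auto intro: antisym order_trans)
qed

lemma qf_reversing:
  assumes "SSDB s" "\<And>b c. s (\<rho> b) (\<rho> c) = s b (- c)"
  shows "qf s (\<rho> y) = - qf s y"
  unfolding qf_def assms(2) by (simp add: SSDB_bilinear[OF assms(1)])

lemma BC_attouch_brezis:
  fixes s :: "'a::banach \<Rightarrow> 'a \<Rightarrow> real"
  assumes S: "SSDB s" and f: "lsc_fun f" "BC_fun s f" and g: "lsc_fun g" "BC_fun s g"
    and \<rho>: "bounded_linear \<rho>" "\<And>b c. s (\<rho> b) (\<rho> c) = s b (- c)"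
    and dom: "set_diff_mk (edom f) (\<rho> -` edom g) = UNIV"
  obtains z where "\<And>a c. ereal (- qf s x + s (a - c) z) \<le> (f a - ereal (s a x)) + g (\<rho> (c - x))"
proof -
  define \<phi> where "\<phi> a = f a - ereal (s a x)" for a
  define \<psi> where "\<psi> c = g (\<rho> (c - x))" for c
  have f_proper: "\<And>a. f a \<noteq> -\<infinity>" and g_proper: "\<And>a. g a \<noteq> -\<infinity>"
    using f(2) g(2) unfolding BC_fun_def proper_fun_def by blast+
  have s_cont: "isCont (\<lambda>a. s a x) a" for a
    using SSDB_bounded_linear_left[OF S] by (simp add: linear_continuous_at)
  have "\<exists>l. bounded_linear l \<and> (\<forall>a c. ereal (- qf s x + l (a - c)) \<le> \<phi> a + \<psi> c)"
  proof (rule attouch_brezis)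
    show \<phi>_proper: "\<phi> a \<noteq> -\<infinity>" for a unfolding \<phi>_def using f_proper[of a] by (cases "f a") auto
    show \<psi>_proper: "\<psi> a \<noteq> -\<infinity>" for a unfolding \<psi>_def using g_proper by blast
    show "convex_fun \<phi>"
      unfolding \<phi>_def using f(2) f_proper SSDB_bounded_linear_left[OF S] bounded_linear.linear
      by (intro convex_fun_diff_linear) (auto simp: BC_fun_def)
    show "convex_fun \<psi>"
      unfolding \<psi>_def using g(2) \<rho>(1) bounded_linear.linear
      by (intro convex_fun_comp_linear_diff) (auto simp: BC_fun_def)
    show "closed {a. \<phi> a \<le> ereal t}" for t
    proof -
      have "{a. \<phi> a \<le> ereal t} = {a. f a \<le> ereal (s a x + t)}"
        unfolding \<phi>_def using f_proper by (intro Collect_cong) (case_tac "f a"; auto simp: algebra_simps)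
      then show ?thesis using closed_lsc_le[OF f(1)] s_cont by (simp add: continuous_intros)
    qed
    show "closed {a. \<psi> a \<le> ereal t}" for t
    proof -
      have "{a. \<psi> a \<le> ereal t} = (\<lambda>c. \<rho> (c - x)) -` {b. g b \<le> ereal t}" unfolding \<psi>_def by auto
      moreover have "isCont (\<lambda>c. \<rho> (c - x)) c" for c
        using continuous_at_compose[of c "\<lambda>c. c - x" \<rho>] linear_continuous_at[OF \<rho>(1)]
        by (simp add: continuous_intros o_def)
      then have "closed ((\<lambda>c. \<rho> (c - x)) -` {b. g b \<le> ereal t})"
        using closed_lsc_le[OF g(1), of "\<lambda>_. t"] by (intro continuous_closed_vimage) auto
      ultimately show ?thesis by simp
    qed
    show "set_diff_mk (edom \<phi>) (edom \<psi>) = UNIV"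
    proof -
      have "u \<in> set_diff_mk (edom \<phi>) (edom \<psi>)" for u
      proof -
        obtain a c where "u + x = a - c" "a \<in> edom f" "\<rho> c \<in> edom g"
          using dom unfolding set_diff_mk_def by blast
        moreover have "edom \<phi> = edom f" unfolding edom_def \<phi>_def by auto
        ultimately show ?thesis
          unfolding set_diff_mk_def edom_def \<psi>_def by (intro CollectI exI[of _ a] exI[of _ "c + x"]) (auto simp: algebra_simps)
      qed
      then show ?thesis by blast
    qed
    show "ereal (- qf s x) \<le> \<phi> a + \<psi> a" for a
    proof -
      have "ereal (qf s a) \<le> f a" "ereal (- qf s (a - x)) \<le> g (\<rho> (a - x))"
        using f(2) g(2) qf_reversing[OF S \<rho>(2)] unfolding BC_fun_def by metis+
      moreover have "qf s a - s a x - qf s (a - x) = - qf s x"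
        unfolding qf_def by (simp add: SSDB_bilinear[OF S] SSDB_sym[OF S, of x a] field_simps)
      ultimately show ?thesis unfolding \<phi>_def \<psi>_def using f_proper[of a]
        by (cases "f a"; cases "g (\<rho> (a - x))") auto
    qed
  qed
  then obtain l where "bounded_linear l" "\<And>a c. ereal (- qf s x + l (a - c)) \<le> \<phi> a + \<psi> c"
    by blast
  then show ?thesis using that SSDB_represents_dual[OF S] unfolding \<phi>_def \<psi>_def by metis
qed

lemma set_diff_mk_Pq_UNIV:
  fixes s :: "'a::banach \<Rightarrow> 'a \<Rightarrow> real"
  assumes S: "SSDB s" and f: "lsc_fun f" "BC_fun s f" and g: "lsc_fun g" "BC_fun s g"
    and \<rho>: "bounded_linear \<rho>" "bij \<rho>" "\<And>b c. s (\<rho> b) (\<rho> c) = s b (- c)"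
    and dom: "set_diff_mk (edom f) (\<rho> -` edom g) = UNIV"
  shows "set_diff_mk (Pq s f) (\<rho> -` Pq s g) = UNIV"
proof -
  have f_proper: "\<And>a. f a \<noteq> -\<infinity>" and g_proper: "\<And>a. g a \<noteq> -\<infinity>"
    using f(2) g(2) unfolding BC_fun_def proper_fun_def by blast+
  have "x \<in> set_diff_mk (Pq s f) (\<rho> -` Pq s g)" for x
  proof -
    obtain z where z: "\<And>a c. ereal (- qf s x + s (a - c) z) \<le> (f a - ereal (s a x)) + g (\<rho> (c - x))"
      using BC_attouch_brezis[OF S f g \<rho>(1,3) dom] by blast
    have "ereal (s a (x + z) + s d (\<rho> z) - (qf s (x + z) + qf s (\<rho> z))) \<le> f a + g d" for a d
    proof -
      obtain c where c: "\<rho> c = d" using bij_is_surj[OF \<rho>(2)] by (metis surjD)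
      have "s d (\<rho> z) = - s c z" using \<rho>(3)[of c z] c by (simp add: SSDB_bilinear[OF S])
      then have "- qf s x + s (a - (c + x)) z + s a x = s a (x + z) + s d (\<rho> z) - (qf s (x + z) + qf s (\<rho> z))"
        unfolding qf_reversing[OF S \<rho>(3)] unfolding qf_def
        by (simp add: SSDB_bilinear[OF S] SSDB_sym[OF S, of z x] field_simps)
      moreover have "ereal (- qf s x + s (a - (c + x)) z) \<le> f a - ereal (s a x) + g d"
        using z[of a "c + x"] c by simp
      ultimately show ?thesis using f_proper[of a] g_proper[of d]
        by (cases "f a"; cases "g d") (auto simp: algebra_simps)
    qed
    then have "x + z \<in> Pq s f" "\<rho> z \<in> Pq s g" using Pq_if_coupled[OF f(2) g(2)] by blast+
    then show ?thesis unfolding set_diff_mk_def by (intro CollectI exI[of _ "x + z"] exI[of _ z]) simp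
  qed
  then show ?thesis by blast
qed

lemma set_diff_mk_edom_UNIV_iff_Pq:
  fixes s :: "'a::banach \<Rightarrow> 'a \<Rightarrow> real"
  assumes "SSDB s" "lsc_fun f" "BC_fun s f" "lsc_fun g" "BC_fun s g"
    and "bounded_linear \<rho>" "bij \<rho>" "\<And>b c. s (\<rho> b) (\<rho> c) = s b (- c)"
  shows "set_diff_mk (edom f) (\<rho> -` edom g) = UNIV \<longleftrightarrow> set_diff_mk (Pq s f) (\<rho> -` Pq s g) = UNIV"
proof
  assume "set_diff_mk (Pq s f) (\<rho> -` Pq s g) = UNIV"
  moreover have "Pq s f \<subseteq> edom f" "Pq s g \<subseteq> edom g" unfolding Pq_def edom_def by auto
  ultimately show "set_diff_mk (edom f) (\<rho> -` edom g) = UNIV" unfolding set_diff_mk_def by blast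
qed (rule set_diff_mk_Pq_UNIV[OF assms])

lemma set_sum_mk_vimage_linear:
  assumes "linear \<rho>"
  shows "set_sum_mk A (\<rho> -` C) = set_diff_mk A ((\<lambda>b. - \<rho> b) -` C)"
  unfolding set_sum_mk_def set_diff_mk_def
proof (intro set_eqI iffI)
  fix x assume "x \<in> {a + c |a c. a \<in> A \<and> c \<in> \<rho> -` C}"
  then obtain a c where "x = a - (- c)" "a \<in> A" "- \<rho> (- c) \<in> C" by (auto simp: linear_neg[OF assms])
  then show "x \<in> {a - c |a c. a \<in> A \<and> c \<in> (\<lambda>b. - \<rho> b) -` C}" by blast
next
  fix x assume "x \<in> {a - c |a c. a \<in> A \<and> c \<in> (\<lambda>b. - \<rho> b) -` C}"
  then obtain a c where "x = a + (- c)" "a \<in> A" "\<rho> (- c) \<in> C" by (auto simp: linear_neg[OF assms])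
  then show "x \<in> {a + c |a c. a \<in> A \<and> c \<in> \<rho> -` C}" by blast
qed

lemma set_sum_mk_edom_UNIV_iff_Pq:
  fixes s :: "'a::banach \<Rightarrow> 'a \<Rightarrow> real"
  assumes S: "SSDB s" and fg: "lsc_fun f" "BC_fun s f" "lsc_fun g" "BC_fun s g"
    and \<rho>: "bounded_linear \<rho>" "bij \<rho>" "\<And>b c. s (\<rho> b) (\<rho> c) = s b (- c)"
  shows "set_sum_mk (edom f) (\<rho> -` edom g) = UNIV \<longleftrightarrow> set_sum_mk (Pq s f) (\<rho> -` Pq s g) = UNIV"
proof -
  have "bij (\<lambda>b. - \<rho> b)"
    using \<rho>(2) by (simp add: bij_def inj_def surj_def) (metis add.inverse_inverse)
  moreover have "s (- \<rho> b) (- \<rho> c) = s b (- c)" for b c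
    using \<rho>(3)[of b c] by (simp add: SSDB_bilinear[OF S])
  ultimately show ?thesis
    unfolding set_sum_mk_vimage_linear[OF bounded_linear.linear[OF \<rho>(1)]]
    using \<rho>(1) by (intro set_diff_mk_edom_UNIV_iff_Pq[OF S fg] bounded_linear_minus)
qed

theorem corollary4p7:
  fixes s :: "'a::banach \<Rightarrow> 'a \<Rightarrow> real"
    and f g :: "'a \<Rightarrow> ereal"
    and \<rho> :: "'a \<Rightarrow> 'a"
  assumes "SSDB s"
    and "proper_fun f" "convex_fun f" "lsc_fun f" "BC_fun s f"
    and "proper_fun g" "convex_fun g" "lsc_fun g" "BC_fun s g"
    and "bounded_linear \<rho>" "bij \<rho>"
    and "\<And>b c. s (\<rho> b) (\<rho> c) = s b (- c)"
  shows "(set_diff_mk (edom f) (\<rho> -` edom g) = UNIV \<longleftrightarrow>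
            set_diff_mk (Pq s f) (\<rho> -` Pq s g) = UNIV)
       \<and> (set_sum_mk (edom f) (\<rho> -` edom g) = UNIV \<longleftrightarrow>
            set_sum_mk (Pq s f) (\<rho> -` Pq s g) = UNIV)"
  using set_diff_mk_edom_UNIV_iff_Pq[OF assms(1,4,5,8,9,10,11,12)]
    set_sum_mk_edom_UNIV_iff_Pq[OF assms(1,4,5,8,9,10,11,12)] by blast

end
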